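(* Consider the following binary deterministic control system with parameters $a'=2$, $\sigma_{v2}'=1$, $p_1'=1$. For $n\ge 0$ and $i\in\mathbb Z$: $x^{n+1}_i=x^n_{i-2}\oplus u^n_{1,i}\oplus u^n_{2,i}\oplus w^n_i$, $y^n_{1,i}=x^n_i$, $y^n_{2,i}=x^n_i\oplus v^n_i$, with $x^0_i=0$ for all $i$. For every $n$, $w^n_i=0$ for $i\ge 0$ and $(w^n_i)_{i<0}$ are i.i.d. Bernoulli$(1/2)$; $v^n_i=0$ for $i\ge 1$ and $(v^n_i)_{i<1}$ are i.i.d. Bernoulli$(1/2)$; all $w$'s and $v$'s are independent. Controllers are causal (controller $j$'s input at time $n$ is a function of $y^0_j,\dots,y^n_j$) and the first controller must satisfy $u^n_{1,i}=0$ for all $i\ge 1$. Call $d$ an achieved distortion level if $x^n_i=0$ for all $i\ge d$ and all $n\ge0$ with probability $1$. Let the controllers use $u^n_{1,i}=y^n_{1,i-2}$ for $i\le 0$ and $u^n_{1,i}=0$ for $i\ge 1$; $u^n_{2,i}=y^n_{2,i-2}$ for $i\ge 3$ and $u^n_{2,i}=0$ for $i\le 2$. Then this strategy achieves distortion level $d=2$, which is the minimum possible achieved distortion level among all admissible strategies.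
   Context: $\oplus$ is XOR. In binary-expansion notation the strategy reads $u_1[n]=y^n_{1,-2}.y^n_{1,-3}y^n_{1,-4}\cdots$ and $u_2[n]=\cdots y^n_{2,2}y^n_{2,1}000.0\cdots$, where the digit immediately left of the binary point has index $0$. *)

theory Defs
  imports "HOL-Probability.Probability"
begin

type_synonym sig = "int \<Rightarrow> bool"

text \<open>A controller: at time n, maps the observation history (Y k for k = 0..n)
  to the control signal u at time n.\<close>
type_synonym ctrl = "nat \<Rightarrow> (nat \<Rightarrow> sig) \<Rightarrow> sig"

definition bxor :: "bool \<Rightarrow> bool \<Rightarrow> bool" (infixl "XOR" 65) where
  "a XOR b = (a \<noteq> b)"

text \<open>Noise coordinates: Inl (n,i) carries w^n_i, Inr (n,i) carries v^n_i.\<close>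
type_synonym noise_idx = "(nat \<times> int) + (nat \<times> int)"

definition noise_space :: "(noise_idx \<Rightarrow> bool) measure" where
  "noise_space = PiM UNIV (\<lambda>_. measure_pmf (bernoulli_pmf (1/2)))"

definition wn :: "(noise_idx \<Rightarrow> bool) \<Rightarrow> nat \<Rightarrow> sig" where
  "wn \<omega> n i = (i < 0 \<and> \<omega> (Inl (n, i)))"

definition vn :: "(noise_idx \<Rightarrow> bool) \<Rightarrow> nat \<Rightarrow> sig" where
  "vn \<omega> n i = (i < 1 \<and> \<omega> (Inr (n, i)))"

text \<open>traj g1 g2 \<omega> n k = x^k for k \<le> n (and all-zero for k > n).
  y1 = x, y2 = x XOR v; observations at times > n are masked to 0.\<close>
fun traj :: "ctrl \<Rightarrow> ctrl \<Rightarrow> (noise_idx \<Rightarrow> bool) \<Rightarrow> nat \<Rightarrow> (nat \<Rightarrow> sig)" where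
  "traj g1 g2 \<omega> 0 = (\<lambda>k i. False)"
| "traj g1 g2 \<omega> (Suc n) =
     (let X = traj g1 g2 \<omega> n;
          Y1 = (\<lambda>k i. k \<le> n \<and> X k i);
          Y2 = (\<lambda>k i. k \<le> n \<and> (X k i XOR vn \<omega> k i))
      in X(Suc n := (\<lambda>i. X n (i - 2) XOR g1 n Y1 i XOR g2 n Y2 i XOR wn \<omega> n i)))"

definition state :: "ctrl \<Rightarrow> ctrl \<Rightarrow> (noise_idx \<Rightarrow> bool) \<Rightarrow> nat \<Rightarrow> sig" where
  "state g1 g2 \<omega> n = traj g1 g2 \<omega> n n"

definition causal :: "ctrl \<Rightarrow> bool" where
  "causal g \<longleftrightarrow> (\<forall>n Y Y'. (\<forall>k\<le>n. Y k = Y' k) \<longrightarrow> g n Y = g n Y')"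

definition admissible :: "ctrl \<Rightarrow> ctrl \<Rightarrow> bool" where
  "admissible g1 g2 \<longleftrightarrow> causal g1 \<and> causal g2 \<and> (\<forall>n Y i. i \<ge> 1 \<longrightarrow> \<not> g1 n Y i)"

definition achieves :: "ctrl \<Rightarrow> ctrl \<Rightarrow> int \<Rightarrow> bool" where
  "achieves g1 g2 d \<longleftrightarrow> (AE \<omega> in noise_space. \<forall>n i. i \<ge> d \<longrightarrow> \<not> state g1 g2 \<omega> n i)"

definition strat1 :: ctrl where
  "strat1 n Y i = (if i \<le> 0 then Y n (i - 2) else False)"

definition strat2 :: ctrl where
  "strat2 n Y i = (if i \<ge> 3 then Y n (i - 2) else False)"

end

theory Submission
  imports Defs
begin

text \<open>
  Under the given strategy controller 1 cancels the shifted bits at positions i \<le> 0 and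
  controller 2 those at i \<ge> 3, where its observation noise vanishes. So the new state is
  the fresh noise w at i \<le> 0, the shifted bit at i = 1, 2 and 0 at i \<ge> 3; since
  w_0 = 0, bits 0 and 2 stay zero.

  For optimality, x^2_1 = x^1_(-1) \<oplus> u^1_(2,1) because controller 1 may not act at position 1.
  Flipping both w^0_(-1) and v^1_(-1) flips x^1_(-1) but leaves everything controller 2 has
  observed up to time 1 unchanged, so it flips x^2_1. The flip preserves the noise
  distribution, hence x^2_1 cannot vanish almost surely.
\<close>

lemma distr_PiM_coordinatewise:
  assumes M: "\<And>i. i \<in> I \<Longrightarrow> prob_space (M i)"
    and f: "\<And>i. i \<in> I \<Longrightarrow> f i \<in> M i \<rightarrow>\<^sub>M M i"
    and preserves: "\<And>i. i \<in> I \<Longrightarrow> distr (M i) (M i) (f i) = M i"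
  shows "distr (PiM I M) (PiM I M) (\<lambda>\<omega>. \<lambda>i\<in>I. f i (\<omega> i)) = PiM I M"
    (is "distr ?P ?P ?F = ?P")
proof (rule measure_eqI_PiM_infinite[symmetric, OF refl])
  interpret prob_space ?P
    using M by (rule prob_space_PiM)
  show "finite_measure ?P"
    by unfold_locales
  have F: "?F \<in> ?P \<rightarrow>\<^sub>M ?P"
    using f by (intro measurable_restrict) (auto intro: measurable_compose[OF measurable_component_singleton])
  fix A J assume J: "finite J" "J \<subseteq> I" and A: "\<And>i. i \<in> J \<Longrightarrow> A i \<in> sets (M i)"
  have fA: "f i -` A i \<inter> space (M i) \<in> sets (M i)" if "i \<in> J" for i
    using J A f that by (auto intro: measurable_sets)
  have "?F -` prod_emb I M J (Pi\<^sub>E J A) \<inter> space ?P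
      = prod_emb I M J (\<Pi>\<^sub>E j\<in>J. f j -` A j \<inter> space (M j))"
    using J f by (auto simp: prod_emb_def space_PiM PiE_iff Pi_iff measurable_space subset_iff)
      (metis measurable_space)
  then have "distr ?P ?P ?F (prod_emb I M J (Pi\<^sub>E J A))
      = ?P (prod_emb I M J (\<Pi>\<^sub>E j\<in>J. f j -` A j \<inter> space (M j)))"
    using J A F by (simp add: emeasure_distr sets_PiM_I)
  also have "\<dots> = (\<Prod>j\<in>J. M j (f j -` A j \<inter> space (M j)))"
    using J fA by (intro emeasure_PiM_emb M) auto
  also have "\<dots> = (\<Prod>j\<in>J. M j (A j))"
    using J A f by (intro prod.cong refl) (metis emeasure_distr preserves subsetD)
  also have "\<dots> = ?P (prod_emb I M J (Pi\<^sub>E J A))"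
    using J A by (intro emeasure_PiM_emb[symmetric] M) auto
  finally show "?P (prod_emb I M J (Pi\<^sub>E J A)) = distr ?P ?P ?F (prod_emb I M J (Pi\<^sub>E J A))"
    by simp
qed simp

lemma map_pmf_Not_bernoulli:
  assumes "0 \<le> p" "p \<le> 1"
  shows "map_pmf Not (bernoulli_pmf p) = bernoulli_pmf (1 - p)"
proof (rule pmf_eqI)
  fix b :: bool
  have "Not -` {b} = {\<not> b}" by auto
  then show "pmf (map_pmf Not (bernoulli_pmf p)) b = pmf (bernoulli_pmf (1 - p)) b"
    using assms by (cases b) (simp_all add: pmf_map measure_pmf_single)
qed

lemma (in prob_space) not_AE_if_invariant_map_negates:
  assumes f: "f \<in> M \<rightarrow>\<^sub>M M" and invariant: "distr M M f = M"
    and negates: "\<And>\<omega>. \<omega> \<in> space M \<Longrightarrow> P (f \<omega>) \<longleftrightarrow> \<not> P \<omega>"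
  shows "\<not> (AE \<omega> in M. P \<omega>)"
proof
  assume P: "AE \<omega> in M. P \<omega>"
  then have "AE \<omega> in distr M M f. P \<omega>"
    unfolding invariant .
  then have "AE \<omega> in M. P (f \<omega>)"
    by (rule AE_distrD[OF f])
  with P AE_space have "AE \<omega> in M. False"
    by eventually_elim (simp add: negates)
  then show False
    by simp
qed

lemma prob_space_noise_space: "prob_space noise_space"
  unfolding noise_space_def by (intro prob_space_PiM prob_space_measure_pmf)

definition flip_noise :: "noise_idx set \<Rightarrow> (noise_idx \<Rightarrow> bool) \<Rightarrow> noise_idx \<Rightarrow> bool" where
  "flip_noise S \<omega> j = (if j \<in> S then \<not> \<omega> j else \<omega> j)"

lemma flip_noise_measurable: "flip_noise S \<in> noise_space \<rightarrow>\<^sub>M noise_space"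
  unfolding noise_space_def flip_noise_def
  by (rule measurable_PiM_single') (auto simp: space_PiM)

lemma distr_flip_noise: "distr noise_space noise_space (flip_noise S) = noise_space"
proof -
  let ?B = "measure_pmf (bernoulli_pmf (1/2))"
  define f where "f j = (if j \<in> S then Not else id)" for j
  have "flip_noise S = (\<lambda>\<omega>. \<lambda>j\<in>UNIV. f j (\<omega> j))"
    by (simp add: flip_noise_def f_def fun_eq_iff)
  moreover have "distr ?B ?B (f j) = ?B" for j
  proof -
    have "distr ?B ?B Not = distr ?B (count_space UNIV) Not"
      by (rule distr_cong) auto
    also have "\<dots> = ?B"
      by (simp add: map_pmf_rep_eq[symmetric] map_pmf_Not_bernoulli)
    finally show ?thesis
      by (simp add: f_def id_def)
  qed
  ultimately show ?thesis
    unfolding noise_space_def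
    by (simp only:) (rule distr_PiM_coordinatewise; simp add: prob_space_measure_pmf)
qed

lemma traj_eq_state: "k \<le> n \<Longrightarrow> traj g1 g2 \<omega> n k = state g1 g2 \<omega> k"
  unfolding state_def
proof (induction n)
  case (Suc n)
  then show ?case
    by (cases "k = Suc n") (auto simp: Let_def)
qed simp

definition obs1 :: "ctrl \<Rightarrow> ctrl \<Rightarrow> (noise_idx \<Rightarrow> bool) \<Rightarrow> nat \<Rightarrow> nat \<Rightarrow> sig" where
  "obs1 g1 g2 \<omega> n k i \<longleftrightarrow> k \<le> n \<and> state g1 g2 \<omega> k i"

definition obs2 :: "ctrl \<Rightarrow> ctrl \<Rightarrow> (noise_idx \<Rightarrow> bool) \<Rightarrow> nat \<Rightarrow> nat \<Rightarrow> sig" where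
  "obs2 g1 g2 \<omega> n k i \<longleftrightarrow> k \<le> n \<and> (state g1 g2 \<omega> k i XOR vn \<omega> k i)"

lemma state_0: "\<not> state g1 g2 \<omega> 0 i"
  by (simp add: state_def)

lemma state_Suc:
  "state g1 g2 \<omega> (Suc n) i =
     (state g1 g2 \<omega> n (i - 2) XOR g1 n (obs1 g1 g2 \<omega> n) i XOR g2 n (obs2 g1 g2 \<omega> n) i
       XOR wn \<omega> n i)"
proof -
  have "(\<lambda>k i. k \<le> n \<and> traj g1 g2 \<omega> n k i) = obs1 g1 g2 \<omega> n"
       "(\<lambda>k i. k \<le> n \<and> (traj g1 g2 \<omega> n k i XOR vn \<omega> k i)) = obs2 g1 g2 \<omega> n"
    by (auto simp: fun_eq_iff obs1_def obs2_def traj_eq_state)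
  then show ?thesis
    by (simp add: state_def Let_def)
qed

lemma strat1_causal: "causal strat1"
  unfolding causal_def strat1_def by (metis order_refl)

lemma strat2_causal: "causal strat2"
  unfolding causal_def strat2_def by (metis order_refl)

lemma admissible_strat: "admissible strat1 strat2"
  by (simp add: admissible_def strat1_causal strat2_causal strat1_def)

lemma state_strat_Suc:
  "state strat1 strat2 \<omega> (Suc n) i =
     (if i \<le> 0 then wn \<omega> n i else i \<le> 2 \<and> state strat1 strat2 \<omega> n (i - 2))"
  by (auto simp: state_Suc strat1_def strat2_def obs1_def obs2_def bxor_def wn_def vn_def)

lemma state_strat_vanishes: "i = 0 \<or> 2 \<le> i \<Longrightarrow> \<not> state strat1 strat2 \<omega> n i"
proof (induction n arbitrary: i)
  case 0
  then show ?case by (simp add: state_0)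
next
  case (Suc n)
  then show ?case
    by (auto simp: state_strat_Suc wn_def)
qed

lemma achieves_strat: "achieves strat1 strat2 2"
  unfolding achieves_def by (simp add: state_strat_vanishes)

lemma wn_flip_noise: "wn (flip_noise S \<omega>) n i = (wn \<omega> n i XOR (i < 0 \<and> Inl (n, i) \<in> S))"
  by (auto simp: wn_def flip_noise_def bxor_def)

lemma vn_flip_noise: "vn (flip_noise S \<omega>) n i = (vn \<omega> n i XOR (i < 1 \<and> Inr (n, i) \<in> S))"
  by (auto simp: vn_def flip_noise_def bxor_def)

definition undetectable_flip :: "noise_idx set" where
  "undetectable_flip = {Inl (0, -1), Inr (1, -1)}"

lemma state_1_flip_noise:
  "state g1 g2 (flip_noise undetectable_flip \<omega>) 1 i = (state g1 g2 \<omega> 1 i XOR (i = -1))"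
proof -
  let ?\<omega>' = "flip_noise undetectable_flip \<omega>"
  have "obs1 g1 g2 ?\<omega>' 0 = obs1 g1 g2 \<omega> 0" "obs2 g1 g2 ?\<omega>' 0 = obs2 g1 g2 \<omega> 0"
    by (auto simp: fun_eq_iff obs1_def obs2_def state_0 vn_flip_noise bxor_def undetectable_flip_def)
  then show ?thesis
    by (auto simp: state_Suc[where n = 0, simplified] state_0 wn_flip_noise bxor_def undetectable_flip_def)
qed

lemma state_2_1_flip_noise:
  assumes "\<And>Y. \<not> g1 1 Y 1"
  shows "state g1 g2 (flip_noise undetectable_flip \<omega>) 2 1 = (\<not> state g1 g2 \<omega> 2 1)"
proof -
  let ?\<omega>' = "flip_noise undetectable_flip \<omega>"
  have "obs2 g1 g2 ?\<omega>' 1 = obs2 g1 g2 \<omega> 1"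
  proof (intro ext)
    fix k i
    show "obs2 g1 g2 ?\<omega>' 1 k i = obs2 g1 g2 \<omega> 1 k i"
      using state_1_flip_noise[of g1 g2 \<omega> i]
      by (cases "k = 0")
        (auto simp: obs2_def state_0 vn_flip_noise undetectable_flip_def bxor_def le_Suc_eq)
  qed
  moreover have "state g1 g2 \<omega>' 2 1 = (state g1 g2 \<omega>' 1 (-1) XOR g2 1 (obs2 g1 g2 \<omega>' 1) 1)"
    for \<omega>'
    using state_Suc[of g1 g2 \<omega>' 1 1] assms by (simp add: wn_def bxor_def numeral_2_eq_2)
  ultimately show ?thesis
    by (simp add: state_1_flip_noise[simplified] bxor_def)
qed

lemma distortion_lower_bound:
  assumes "\<And>Y. \<not> g1 1 Y 1" and "achieves g1 g2 d"
  shows "2 \<le> d"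
proof (rule ccontr)
  assume "\<not> 2 \<le> d"
  with \<open>achieves g1 g2 d\<close> have "AE \<omega> in noise_space. \<not> state g1 g2 \<omega> 2 1"
    unfolding achieves_def by (auto elim: AE_mp)
  moreover have "\<not> (AE \<omega> in noise_space. \<not> state g1 g2 \<omega> 2 1)"
    by (rule prob_space.not_AE_if_invariant_map_negates[OF prob_space_noise_space
          flip_noise_measurable distr_flip_noise[of undetectable_flip]])
      (simp add: state_2_1_flip_noise[of g1 g2, OF assms(1)])
  ultimately show False
    by contradiction
qed

theorem proposition2:
  shows "admissible strat1 strat2 \<and> achieves strat1 strat2 2 \<and>
         (\<forall>g1 g2 (d::int). admissible g1 g2 \<and> achieves g1 g2 d \<longrightarrow> 2 \<le> d)"
proof -
  have "2 \<le> d" if "admissible g1 g2" "achieves g1 g2 d" for g1 g2 d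
    using that by (intro distortion_lower_bound) (auto simp: admissible_def)
  then show ?thesis
    using admissible_strat achieves_strat by blast
qed

end
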